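(* Let $D$ be a rooted hyperbolic digraph with constant out-degree and bounded in-degree. If $g$ is a self-embedding of $D$ that is not elliptic and $v\in V(D)$ satisfies $d(v,g(v))<\infty$, then the map $\sigma\colon\mathbb{N}\to V(D)$, $i\mapsto g^i(v)$, is a quasi-isometric embedding, i.e. there are $\gamma\ge1$ and $c\ge0$ such that $\gamma^{-1}(j-i)-c\le d(g^i(v),g^j(v))\le\gamma(j-i)+c$ for all $i\le j$ in $\mathbb{N}$.
   Context: Digraph notions: a directed path $x_0\ldots x_n$ has edges $x_ix_{i+1}$; $d(x,y)$ is the length of a shortest directed $x$-$y$ path ($\infty$ if none), called an $x$-$y$ geodesic. $D$ is rooted if some vertex $o$ satisfies $d(o,v)<\infty$ for all $v$. $\mathcal{B}^+_k(x)=\{y:d(x,y)\le k\}$, $\mathcal{B}^-_k(x)=\{y:d(y,x)\le k\}$, extended to sets by unions. A geodesic triangle consists of three vertices and for each pair a geodesic between them (in one direction); it is $\delta$-thin if whenever $P,Q,R$ are its sides with the start of $P$ being the start or end of $Q$ and the end of $P$ being the start or end of $R$, $P\subseteq\mathcal{B}^+_\delta(Q)\cup\mathcal{B}^-_\delta(R)$; $D$ is hyperbolic if for some $\delta\ge0$ all geodesic triangles are $\delta$-thin. A self-embedding is an injective map $g:V(D)\to V(D)$ with $xy\in E(D)\iff g(x)g(y)\in E(D)$. It is elliptic if $g(F)=F$ for some nonempty finite vertex set $F$. Here $\mathbb{N}$ is regarded as the directed ray $0\to1\to2\to\cdots$. *)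

theory Defs
  imports Main "HOL-Library.Extended_Nat"
begin

definition dist :: "('a \<times> 'a) set \<Rightarrow> 'a \<Rightarrow> 'a \<Rightarrow> enat" where
  "dist E x y = (INF n \<in> {n. (x, y) \<in> E ^^ n}. enat n)"

definition is_dpath :: "'a set \<Rightarrow> ('a \<times> 'a) set \<Rightarrow> 'a list \<Rightarrow> bool" where
  "is_dpath V E xs \<longleftrightarrow> xs \<noteq> [] \<and> set xs \<subseteq> V \<and>
     (\<forall>i. Suc i < length xs \<longrightarrow> (xs ! i, xs ! Suc i) \<in> E)"

definition is_geodesic :: "'a set \<Rightarrow> ('a \<times> 'a) set \<Rightarrow> 'a list \<Rightarrow> bool" where
  "is_geodesic V E xs \<longleftrightarrow> is_dpath V E xs \<and>
     enat (length xs - 1) = dist E (hd xs) (last xs)"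

definition out_ball :: "('a \<times> 'a) set \<Rightarrow> nat \<Rightarrow> 'a set \<Rightarrow> 'a set" where
  "out_ball E k S = {y. \<exists>s\<in>S. dist E s y \<le> enat k}"

definition in_ball :: "('a \<times> 'a) set \<Rightarrow> nat \<Rightarrow> 'a set \<Rightarrow> 'a set" where
  "in_ball E k S = {y. \<exists>s\<in>S. dist E y s \<le> enat k}"

definition geodesic_triangle :: "'a set \<Rightarrow> ('a \<times> 'a) set \<Rightarrow> 'a \<Rightarrow> 'a \<Rightarrow> 'a \<Rightarrow>
     'a list \<Rightarrow> 'a list \<Rightarrow> 'a list \<Rightarrow> bool" where
  "geodesic_triangle V E x y z P Q R \<longleftrightarrow>
     is_geodesic V E P \<and> is_geodesic V E Q \<and> is_geodesic V E R \<and>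
     {hd P, last P} = {x, y} \<and> {hd Q, last Q} = {y, z} \<and> {hd R, last R} = {x, z}"

definition thin_triangle :: "('a \<times> 'a) set \<Rightarrow> nat \<Rightarrow> 'a list \<Rightarrow> 'a list \<Rightarrow> 'a list \<Rightarrow> bool" where
  "thin_triangle E \<delta> A B C \<longleftrightarrow>
     (\<forall>(P, Q, R) \<in> {(A, B, C), (A, C, B), (B, A, C), (B, C, A), (C, A, B), (C, B, A)}.
        (hd P = hd Q \<or> hd P = last Q) \<and> (last P = hd R \<or> last P = last R) \<longrightarrow>
        set P \<subseteq> out_ball E \<delta> (set Q) \<union> in_ball E \<delta> (set R))"

definition hyperbolic_digraph :: "'a set \<Rightarrow> ('a \<times> 'a) set \<Rightarrow> bool" where
  "hyperbolic_digraph V E \<longleftrightarrow> (\<exists>\<delta>::nat. \<forall>x y z P Q R.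
     geodesic_triangle V E x y z P Q R \<longrightarrow> thin_triangle E \<delta> P Q R)"

definition rooted :: "'a set \<Rightarrow> ('a \<times> 'a) set \<Rightarrow> bool" where
  "rooted V E \<longleftrightarrow> (\<exists>r\<in>V. \<forall>v\<in>V. dist E r v < \<infinity>)"

definition constant_out_degree :: "'a set \<Rightarrow> ('a \<times> 'a) set \<Rightarrow> bool" where
  "constant_out_degree V E \<longleftrightarrow> (\<exists>k::nat. \<forall>v\<in>V.
     finite {w. (v, w) \<in> E} \<and> card {w. (v, w) \<in> E} = k)"

definition bounded_in_degree :: "'a set \<Rightarrow> ('a \<times> 'a) set \<Rightarrow> bool" where
  "bounded_in_degree V E \<longleftrightarrow> (\<exists>m::nat. \<forall>v\<in>V.
     finite {u. (u, v) \<in> E} \<and> card {u. (u, v) \<in> E} \<le> m)"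

definition self_embedding :: "'a set \<Rightarrow> ('a \<times> 'a) set \<Rightarrow> ('a \<Rightarrow> 'a) \<Rightarrow> bool" where
  "self_embedding V E g \<longleftrightarrow> g ` V \<subseteq> V \<and> inj_on g V \<and>
     (\<forall>x\<in>V. \<forall>y\<in>V. (x, y) \<in> E \<longleftrightarrow> (g x, g y) \<in> E)"

definition elliptic :: "'a set \<Rightarrow> ('a \<Rightarrow> 'a) \<Rightarrow> bool" where
  "elliptic V g \<longleftrightarrow> (\<exists>F. F \<noteq> {} \<and> finite F \<and> F \<subseteq> V \<and> g ` F = F)"

end

theory Submission
  imports Defs
begin

(* Write disp n for d(v, g^n v). Constant out-degree makes every power of g map
   out-neighbourhoods onto out-neighbourhoods, so it preserves distances; hence
   d(g^i v, g^j v) = disp (j - i), disp is subadditive and disp n <= n * disp 1.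
   For the lower bound, non-ellipticity makes orbits injective, so disp is unbounded and some N
   has disp N large and minimal on [N, oo). Let y be the vertex at distance about A from v on a
   geodesic R from v to g^N v. If disp j <= A for all j <= J, thinness of the triangles
   (v, g^j v, g^(N+j) v) and (v, g^N v, g^(N+j) v) puts each g^j y within delta, inwards and
   outwards, of a vertex of R at distance O(A) from v; that this distance is O(A) comes from
   bounded in-degree. Bounded degrees then bound J linearly in A, and subadditivity turns this
   into n <= 2 beta disp n. *)

lemma dist_le_if_relpow: "(x, y) \<in> E ^^ n \<Longrightarrow> dist E x y \<le> enat n"
  unfolding dist_def by (rule INF_lower) simp

lemma relpow_if_dist_eq:
  assumes "dist E x y = enat n"
  shows "(x, y) \<in> E ^^ n"
proof -
  let ?S = "enat ` {n. (x, y) \<in> E ^^ n}"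
  have "?S \<noteq> {}"
  proof
    assume "?S = {}"
    then show False
      using assms by (simp add: dist_def top_enat_def)
  qed
  then have "Inf ?S \<in> ?S"
    unfolding Inf_enat_def by (auto intro: LeastI)
  then show ?thesis
    using assms unfolding dist_def by auto
qed

lemma dist_le_enat_iff: "dist E x y \<le> enat n \<longleftrightarrow> (\<exists>m\<le>n. (x, y) \<in> E ^^ m)"
  by (metis dist_le_if_relpow enat_ord_simps(1) enat_ile order.trans relpow_if_dist_eq)

lemma dist_self [simp]: "dist E x x = 0"
  by (metis dist_le_if_relpow relpow_0_I le_zero_eq zero_enat_def)

lemma dist_triangle: "dist E x z \<le> dist E x y + dist E y z"
proof (cases "dist E x y" ; cases "dist E y z")
  fix m n assume "dist E x y = enat m" "dist E y z = enat n"
  then have "(x, z) \<in> E ^^ (m + n)"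
    by (meson relpow_if_dist_eq relpow_trans)
  then show ?thesis
    using \<open>dist E x y = enat m\<close> \<open>dist E y z = enat n\<close> dist_le_if_relpow by fastforce
qed simp_all

lemma dist_triangle_enat:
  "dist E x y \<le> enat m \<Longrightarrow> dist E y z \<le> enat n \<Longrightarrow> dist E x z \<le> enat (m + n)"
  by (metis add_mono dist_triangle order.trans plus_enat_simps(1))

lemma relpow_converse:
  fixes E :: "('a \<times> 'a) set"
  shows "(x, y) \<in> (E\<inverse>) ^^ n \<longleftrightarrow> (y, x) \<in> E ^^ n"
proof (induction n arbitrary: y)
  case (Suc n)
  show ?case
  proof
    assume "(x, y) \<in> (E\<inverse>) ^^ Suc n"
    then obtain z where "(x, z) \<in> (E\<inverse>) ^^ n" "(y, z) \<in> E"
      by auto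
    then show "(y, x) \<in> E ^^ Suc n"
      using Suc.IH by (blast intro: relpow_Suc_I2)
  next
    assume "(y, x) \<in> E ^^ Suc n"
    then obtain z where "(y, z) \<in> E" "(z, x) \<in> E ^^ n"
      by (blast dest: relpow_Suc_D2)
    then show "(x, y) \<in> (E\<inverse>) ^^ Suc n"
      using Suc.IH by auto
  qed
qed auto

lemma dist_converse: "dist (E\<inverse>) x y = dist E y x"
  by (simp add: dist_def relpow_converse)

lemma out_ball_0 [simp]: "out_ball E 0 S = S"
proof -
  have "dist E s y \<le> enat 0 \<longleftrightarrow> s = y" for s y
    by (simp add: dist_le_enat_iff)
  then show ?thesis
    unfolding out_ball_def by auto
qed

lemma out_ball_Suc: "out_ball E (Suc c) S = out_ball E c S \<union> E `` out_ball E c S"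
proof (intro set_eqI iffI)
  fix y assume "y \<in> out_ball E (Suc c) S"
  then obtain s m where "s \<in> S" "m \<le> Suc c" "(s, y) \<in> E ^^ m"
    unfolding out_ball_def dist_le_enat_iff by blast
  then consider "m \<le> c" | "m = Suc c"
    by linarith
  then show "y \<in> out_ball E c S \<union> E `` out_ball E c S"
  proof cases
    case 1
    then show ?thesis
      using \<open>s \<in> S\<close> \<open>(s, y) \<in> E ^^ m\<close> unfolding out_ball_def dist_le_enat_iff by blast
  next
    case 2
    then obtain z where "(s, z) \<in> E ^^ c" "(z, y) \<in> E"
      using \<open>(s, y) \<in> E ^^ m\<close> by auto
    then show ?thesis
      using \<open>s \<in> S\<close> unfolding out_ball_def dist_le_enat_iff by blast
  qed
next
  fix y assume "y \<in> out_ball E c S \<union> E `` out_ball E c S"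
  then show "y \<in> out_ball E (Suc c) S"
    unfolding out_ball_def dist_le_enat_iff by (auto intro: le_SucI relpow_Suc_I)
qed

lemma card_Image_le:
  assumes "finite A" and "\<And>x. finite (E `` {x})" and "\<And>x. card (E `` {x}) \<le> K"
  shows "finite (E `` A)" and "card (E `` A) \<le> K * card A"
proof -
  have Image_eq: "E `` A = (\<Union>x\<in>A. E `` {x})"
    by blast
  show "finite (E `` A)"
    unfolding Image_eq using assms by blast
  have "card (E `` A) \<le> (\<Sum>x\<in>A. card (E `` {x}))"
    unfolding Image_eq using assms(1) by (rule card_UN_le)
  also have "\<dots> \<le> K * card A"
    using sum_mono[of A "\<lambda>x. card (E `` {x})" "\<lambda>_. K"] assms(3) by (simp add: mult.commute)
  finally show "card (E `` A) \<le> K * card A" .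
qed

lemma out_ball_finite_card_le:
  assumes "finite S" and "\<And>x. finite (E `` {x})" and "\<And>x. card (E `` {x}) \<le> K"
  shows "finite (out_ball E c S) \<and> card (out_ball E c S) \<le> (K + 1) ^ c * card S"
proof (induction c)
  case (Suc c)
  let ?B = "out_ball E c S"
  have "finite ?B" and card_B: "card ?B \<le> (K + 1) ^ c * card S"
    using Suc.IH by auto
  then have "finite (E `` ?B)" and "card (E `` ?B) \<le> K * card ?B"
    using card_Image_le assms(2,3) by blast+
  then have "card (out_ball E (Suc c) S) \<le> (K + 1) * card ?B"
    unfolding out_ball_Suc using card_Un_le[of ?B "E `` ?B"] by simp
  also have "\<dots> \<le> (K + 1) * ((K + 1) ^ c * card S)"
    using card_B by (rule mult_le_mono2)
  finally show ?case
    unfolding out_ball_Suc power_Suc mult.assoc using \<open>finite ?B\<close> \<open>finite (E `` ?B)\<close> by simp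
qed (use assms in simp)

lemma in_ball_eq_out_ball_converse: "in_ball E c S = out_ball (E\<inverse>) c S"
  by (simp add: in_ball_def out_ball_def dist_converse)

lemma dpath_nth_relpow:
  assumes "is_dpath V E xs" and "i \<le> k" and "k < length xs"
  shows "(xs ! i, xs ! k) \<in> E ^^ (k - i)"
  using assms(2,3)
proof (induction k)
  case (Suc k)
  show ?case
  proof (cases "i = Suc k")
    case False
    then have "(xs ! i, xs ! k) \<in> E ^^ (k - i)" and "(xs ! k, xs ! Suc k) \<in> E"
      using Suc assms(1) unfolding is_dpath_def by auto
    then show ?thesis
      using False Suc.prems(1) by (auto simp: Suc_diff_le)
  qed simp
qed simp

lemma geodesic_set_subset: "is_geodesic V E xs \<Longrightarrow> set xs \<subseteq> V"
  unfolding is_geodesic_def is_dpath_def by blast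

lemma geodesic_dist_nth:
  assumes "is_geodesic V E xs" and "i < length xs"
  shows "dist E (hd xs) (xs ! i) = enat i"
    and "dist E (xs ! i) (last xs) = enat (length xs - 1 - i)"
proof -
  have path: "is_dpath V E xs" and len: "dist E (hd xs) (last xs) = enat (length xs - 1)"
    using assms(1) unfolding is_geodesic_def by auto
  then have hd: "hd xs = xs ! 0" and last: "last xs = xs ! (length xs - 1)"
    unfolding is_dpath_def by (auto simp: hd_conv_nth last_conv_nth)
  have le1: "dist E (hd xs) (xs ! i) \<le> enat i"
    using dpath_nth_relpow[OF path, of 0 i] assms(2) hd by (simp add: dist_le_if_relpow)
  have le2: "dist E (xs ! i) (last xs) \<le> enat (length xs - 1 - i)"
    using dpath_nth_relpow[OF path, of i "length xs - 1"] assms(2) last by (simp add: dist_le_if_relpow)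
  obtain a b where a: "dist E (hd xs) (xs ! i) = enat a" and b: "dist E (xs ! i) (last xs) = enat b"
    using le1 le2 by (meson enat_ile)
  have "enat (length xs - 1) \<le> enat a + enat b"
    using dist_triangle len a b by metis
  then show "dist E (hd xs) (xs ! i) = enat i" and "dist E (xs ! i) (last xs) = enat (length xs - 1 - i)"
    using le1 le2 a b assms(2) by auto
qed

lemma dist_hd_geodesic_le:
  assumes "is_geodesic V E xs" and "s \<in> set xs"
  shows "dist E (hd xs) s \<le> dist E (hd xs) (last xs)"
    and "dist E s (last xs) \<le> dist E (hd xs) (last xs)"
proof -
  obtain i where "i < length xs" "s = xs ! i"
    using assms(2) by (auto simp: in_set_conv_nth)
  moreover have "dist E (hd xs) (last xs) = enat (length xs - 1)"
    using assms(1) unfolding is_geodesic_def by simp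
  ultimately show "dist E (hd xs) s \<le> dist E (hd xs) (last xs)"
    and "dist E s (last xs) \<le> dist E (hd xs) (last xs)"
    using geodesic_dist_nth[OF assms(1)] by auto
qed

lemma dist_le_if_out_ball_geodesic:
  assumes "is_geodesic V E xs" and "u \<in> out_ball E c (set xs)"
  shows "dist E (hd xs) u \<le> dist E (hd xs) (last xs) + enat c"
proof -
  obtain s where "s \<in> set xs" "dist E s u \<le> enat c"
    using assms(2) unfolding out_ball_def by blast
  then show ?thesis
    using dist_hd_geodesic_le(1)[OF assms(1)] dist_triangle add_mono order_trans by metis
qed

lemma dist_le_if_in_ball_geodesic:
  assumes "is_geodesic V E xs" and "u \<in> in_ball E c (set xs)"
  shows "dist E u (last xs) \<le> enat c + dist E (hd xs) (last xs)"
proof -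
  obtain s where "s \<in> set xs" "dist E u s \<le> enat c"
    using assms(2) unfolding in_ball_def by blast
  then show ?thesis
    using dist_hd_geodesic_le(2)[OF assms(1)] dist_triangle add_mono order_trans by metis
qed

lemma in_set_take_if_dist_hd_geodesic_le:
  assumes "is_geodesic V E xs" and "s \<in> set xs" and "dist E (hd xs) s \<le> enat k"
  shows "s \<in> set (take (Suc k) xs)"
proof -
  obtain i where "i < length xs" "s = xs ! i"
    using assms(2) by (auto simp: in_set_conv_nth)
  moreover have "i \<le> k"
    using geodesic_dist_nth(1)[OF assms(1) \<open>i < length xs\<close>] assms(3) \<open>s = xs ! i\<close> by simp
  ultimately show ?thesis
    by (auto simp: in_set_conv_nth)
qed

lemma geodesic_exists:
  assumes "E \<subseteq> V \<times> V" and "x \<in> V" and "dist E x y = enat n"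
  obtains xs where "is_geodesic V E xs" "hd xs = x" "last xs = y" "length xs = Suc n"
proof -
  obtain f where f: "f 0 = x" "f n = y" "\<And>i. i < n \<Longrightarrow> (f i, f (Suc i)) \<in> E"
    using relpow_if_dist_eq[OF assms(3)] relpow_fun_conv by metis
  have "f i \<in> V" if "i \<le> n" for i
    using that by (induction i) (use f assms(1,2) in \<open>auto simp: Suc_le_eq\<close>)
  then have "is_dpath V E (map f [0..<Suc n])"
    using f(3) unfolding is_dpath_def by (auto simp: nth_append simp del: upt_Suc)
  then show ?thesis
    using that[of "map f [0..<Suc n]"] f assms(3) unfolding is_geodesic_def
    by (simp add: hd_map last_map del: upt_Suc)
qed

lemma self_embedding_funpow:
  assumes "self_embedding V E g"
  shows "self_embedding V E (g ^^ n)"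
proof (induction n)
  case (Suc n)
  have g: "g ` V \<subseteq> V" "inj_on g V"
    "\<And>x y. x \<in> V \<Longrightarrow> y \<in> V \<Longrightarrow> (x, y) \<in> E \<longleftrightarrow> (g x, g y) \<in> E"
    using assms unfolding self_embedding_def by auto
  have gn: "(g ^^ n) ` V \<subseteq> V" "inj_on (g ^^ n) V"
    "\<And>x y. x \<in> V \<Longrightarrow> y \<in> V \<Longrightarrow> (x, y) \<in> E \<longleftrightarrow> ((g ^^ n) x, (g ^^ n) y) \<in> E"
    using Suc.IH unfolding self_embedding_def by auto
  have "inj_on (g \<circ> g ^^ n) V"
    using gn(1,2) g(2) by (blast intro: comp_inj_on inj_on_subset)
  moreover have "(x, y) \<in> E \<longleftrightarrow> ((g \<circ> g ^^ n) x, (g \<circ> g ^^ n) y) \<in> E"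
    if "x \<in> V" "y \<in> V" for x y
  proof -
    have "(g ^^ n) x \<in> V" "(g ^^ n) y \<in> V"
      using that gn(1) by auto
    then show ?thesis
      using gn(3)[OF that] g(3) by simp
  qed
  ultimately show ?case
    using g(1) gn(1) unfolding self_embedding_def funpow.simps(2) by (auto simp: image_subset_iff)
qed (simp add: self_embedding_def)

lemma self_embedding_Image:
  assumes "constant_out_degree V E" and "E \<subseteq> V \<times> V" and "self_embedding V E g" and "x \<in> V"
  shows "E `` {g x} = g ` (E `` {x})"
proof -
  have "E `` {x} \<subseteq> V" and "g x \<in> V"
    using assms(2,3,4) unfolding self_embedding_def by auto
  then have sub: "g ` (E `` {x}) \<subseteq> E `` {g x}" and inj: "inj_on g (E `` {x})"
    using assms(3,4) unfolding self_embedding_def by (auto intro: inj_on_subset)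
  obtain K where "finite (E `` {g x})" "card (E `` {g x}) = K" "card (E `` {x}) = K"
    using assms(1,4) \<open>g x \<in> V\<close> unfolding constant_out_degree_def Image_singleton by blast
  then show ?thesis
    using card_subset_eq[OF _ sub] card_image[OF inj] by simp
qed

lemma self_embedding_relpow_iff:
  assumes "constant_out_degree V E" and "E \<subseteq> V \<times> V" and "self_embedding V E g"
    and "x \<in> V" and "y \<in> V"
  shows "(g x, g y) \<in> E ^^ n \<longleftrightarrow> (x, y) \<in> E ^^ n"
  using assms(4)
proof (induction n arbitrary: x)
  case 0
  then show ?case
    using assms(3,5) unfolding self_embedding_def inj_on_def by auto
next
  case (Suc n)
  show ?case
  proof
    assume "(g x, g y) \<in> E ^^ Suc n"
    then obtain w where "(g x, w) \<in> E" and "(w, g y) \<in> E ^^ n"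
      by (blast dest: relpow_Suc_D2)
    then obtain z where "(x, z) \<in> E" and "w = g z"
      using self_embedding_Image[OF assms(1-3) Suc.prems] by blast
    then show "(x, y) \<in> E ^^ Suc n"
      using Suc.IH \<open>(w, g y) \<in> E ^^ n\<close> assms(2) by (blast intro: relpow_Suc_I2)
  next
    assume "(x, y) \<in> E ^^ Suc n"
    then obtain z where "(x, z) \<in> E" and "(z, y) \<in> E ^^ n"
      by (blast dest: relpow_Suc_D2)
    moreover have "z \<in> V"
      using \<open>(x, z) \<in> E\<close> assms(2) by blast
    ultimately show "(g x, g y) \<in> E ^^ Suc n"
      using Suc assms(3,5) unfolding self_embedding_def by (blast intro: relpow_Suc_I2)
  qed
qed

lemma self_embedding_dist:
  assumes "constant_out_degree V E" and "E \<subseteq> V \<times> V" and "self_embedding V E g"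
    and "x \<in> V" and "y \<in> V"
  shows "dist E (g x) (g y) = dist E x y"
  using self_embedding_relpow_iff[OF assms] by (simp add: dist_def)

lemma geodesic_map_self_embedding:
  assumes "constant_out_degree V E" and "E \<subseteq> V \<times> V" and "self_embedding V E g"
    and "is_geodesic V E xs"
  shows "is_geodesic V E (map g xs)"
proof -
  have path: "is_dpath V E xs" and len: "enat (length xs - 1) = dist E (hd xs) (last xs)"
    using assms(4) unfolding is_geodesic_def by auto
  then have "xs \<noteq> []" and "set xs \<subseteq> V"
    unfolding is_dpath_def by auto
  then have "is_dpath V E (map g xs)"
    using path assms(3) unfolding is_dpath_def self_embedding_def by (auto simp: subset_iff)
  moreover have "dist E (g (hd xs)) (g (last xs)) = dist E (hd xs) (last xs)"
    using self_embedding_dist[OF assms(1-3)] \<open>xs \<noteq> []\<close> \<open>set xs \<subseteq> V\<close> by (simp add: subset_iff)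
  ultimately show ?thesis
    using len \<open>xs \<noteq> []\<close> unfolding is_geodesic_def by (simp add: hd_map last_map)
qed

lemma inj_orbit_if_not_elliptic:
  assumes "self_embedding V E g" and "\<not> elliptic V g" and "y \<in> V"
  shows "inj (\<lambda>k. (g ^^ k) y)"
proof (rule linorder_injI, rule notI)
  fix i j :: nat
  assume "i < j" and eq: "(g ^^ i) y = (g ^^ j) y"
  define F where "F = (\<lambda>k. (g ^^ k) y) ` {i..<j}"
  have "g ` F = (\<lambda>k. (g ^^ k) y) ` {Suc i..<Suc j}"
    unfolding F_def image_image image_Suc_atLeastLessThan[symmetric] by simp
  also have "\<dots> = F"
  proof -
    have "{Suc i..<Suc j} = insert j {Suc i..<j}" and "{i..<j} = insert i {Suc i..<j}"
      using \<open>i < j\<close> by auto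
    then show ?thesis
      unfolding F_def using eq by simp
  qed
  finally have "g ` F = F" .
  moreover have "F \<noteq> {}" and "finite F" and "F \<subseteq> V"
    using \<open>i < j\<close> self_embedding_funpow[OF assms(1)] assms(3)
    unfolding F_def self_embedding_def by (auto simp: image_subset_iff)
  ultimately show False
    using assms(2) unfolding elliptic_def by blast
qed

locale thin_digraph =
  fixes V :: "'a set" and E :: "('a \<times> 'a) set" and \<delta> :: nat
  assumes edges_subset: "E \<subseteq> V \<times> V"
    and thin: "\<And>x y z P Q R. geodesic_triangle V E x y z P Q R \<Longrightarrow> thin_triangle E \<delta> P Q R"
begin

lemma geodesic_side_subset_balls:
  assumes "is_geodesic V E P" and "is_geodesic V E Q" and "is_geodesic V E R"
    and "{hd Q, last Q} = {hd P, w}" and "{hd R, last R} = {last P, w}"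
  shows "set P \<subseteq> out_ball E \<delta> (set Q) \<union> in_ball E \<delta> (set R)"
proof -
  have "geodesic_triangle V E (hd P) (last P) w P R Q"
    using assms unfolding geodesic_triangle_def by auto
  then have "thin_triangle E \<delta> P R Q"
    by (rule thin)
  moreover have "hd P \<in> {hd Q, last Q}" and "last P \<in> {hd R, last R}"
    using assms(4,5) by simp_all
  ultimately show ?thesis
    unfolding thin_triangle_def by simp
qed

lemma in_ball_third_side_if_far:
  assumes "is_geodesic V E P" and "is_geodesic V E Q" and "is_geodesic V E R"
    and "{hd Q, last Q} = {hd P, w}" and "{hd R, last R} = {last P, w}"
    and "u \<in> set P" and "dist E (hd Q) (last Q) + enat \<delta> < dist E (hd Q) u"
  shows "u \<in> in_ball E \<delta> (set R)"
  using geodesic_side_subset_balls[OF assms(1-5)] dist_le_if_out_ball_geodesic[OF assms(2)] assms(6,7)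
  by (meson UnE leD subsetD)

lemma out_ball_second_side_if_far:
  assumes "is_geodesic V E P" and "is_geodesic V E Q" and "is_geodesic V E R"
    and "{hd Q, last Q} = {hd P, w}" and "{hd R, last R} = {last P, w}"
    and "u \<in> set P" and "enat \<delta> + dist E (hd R) (last R) < dist E u (last R)"
  shows "u \<in> out_ball E \<delta> (set Q)"
  using geodesic_side_subset_balls[OF assms(1-5)] dist_le_if_in_ball_geodesic[OF assms(3)] assms(6,7)
  by (meson UnE leD subsetD)

(* The vertices of a geodesic from alpha to p beyond distance d(alpha, q) + delta are not near a
   geodesic from alpha to q, so thinness puts them into the in-ball of q. *)
lemma dist_le_add_card_in_ball:
  assumes "\<alpha> \<in> V" and "p \<in> V" and "dist E \<alpha> p = enat m" and "dist E \<alpha> q = enat n"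
    and "dist E p q \<le> enat c" and "finite (in_ball E (\<delta> + c) {q})"
  shows "m \<le> n + \<delta> + card (in_ball E (\<delta> + c) {q})"
proof -
  obtain c' where "dist E p q = enat c'"
    using assms(5) enat_ile by blast
  obtain P where P: "is_geodesic V E P" "hd P = \<alpha>" "last P = p" "length P = Suc m"
    using geodesic_exists[OF edges_subset assms(1,3)] .
  obtain Q where Q: "is_geodesic V E Q" "hd Q = \<alpha>" "last Q = q"
    using geodesic_exists[OF edges_subset assms(1,4)] .
  obtain R where R: "is_geodesic V E R" "hd R = p" "last R = q"
    using geodesic_exists[OF edges_subset assms(2) \<open>dist E p q = enat c'\<close>] .
  have dist_nth: "dist E \<alpha> (P ! i) = enat i" if "i \<in> {n + \<delta><..m}" for i
    using geodesic_dist_nth(1)[OF P(1)] that P(2,4) by auto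
  have "P ! i \<in> in_ball E (\<delta> + c) {q}" if i: "i \<in> {n + \<delta><..m}" for i
  proof -
    have "P ! i \<in> in_ball E \<delta> (set R)"
      using in_ball_third_side_if_far[OF P(1) Q(1) R(1), where w = q] P Q R dist_nth[OF i] i assms(4)
      by simp
    then have "dist E (P ! i) (last R) \<le> enat \<delta> + dist E (hd R) (last R)"
      by (rule dist_le_if_in_ball_geodesic[OF R(1)])
    also have "\<dots> \<le> enat \<delta> + enat c"
      using assms(5) R(2,3) by (intro add_left_mono) simp
    finally show ?thesis
      using R(3) by (simp add: in_ball_def)
  qed
  moreover have "inj_on (nth P) {n + \<delta><..m}"
    by (rule inj_onI) (metis dist_nth enat.inject)
  ultimately have "card {n + \<delta><..m} \<le> card (in_ball E (\<delta> + c) {q})"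
    using card_inj_on_le[OF _ _ assms(6)] by blast
  then show ?thesis
    by simp
qed

end

locale embedding_orbit = thin_digraph +
  fixes K M :: nat and g :: "'a \<Rightarrow> 'a" and v :: 'a
  assumes out_degree: "\<forall>x\<in>V. finite {w. (x, w) \<in> E} \<and> card {w. (x, w) \<in> E} = K"
    and in_degree: "\<forall>x\<in>V. finite {u. (u, x) \<in> E} \<and> card {u. (u, x) \<in> E} \<le> M"
    and embedding: "self_embedding V E g"
    and not_elliptic: "\<not> elliptic V g"
    and base_in: "v \<in> V"
    and dist_step_finite: "dist E v (g v) < \<infinity>"
begin

lemma out_neighbours_le: "finite (E `` {x}) \<and> card (E `` {x}) \<le> K"
proof (cases "x \<in> V")
  case False
  then have "E `` {x} = {}"
    using edges_subset by blast
  then show ?thesis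
    by simp
qed (use out_degree in \<open>simp add: Image_singleton\<close>)

lemma in_neighbours_le: "finite (E\<inverse> `` {x}) \<and> card (E\<inverse> `` {x}) \<le> M"
proof (cases "x \<in> V")
  case False
  then have "E\<inverse> `` {x} = {}"
    using edges_subset by blast
  then show ?thesis
    by simp
qed (use in_degree in \<open>simp add: Image_singleton\<close>)

lemma finite_out_ball: "finite S \<Longrightarrow> finite (out_ball E c S)"
  and card_out_ball_le: "finite S \<Longrightarrow> card (out_ball E c S) \<le> (K + 1) ^ c * card S"
  using out_ball_finite_card_le[of S E K c] out_neighbours_le by auto

lemma finite_in_ball: "finite S \<Longrightarrow> finite (in_ball E c S)"
  and card_in_ball_le: "finite S \<Longrightarrow> card (in_ball E c S) \<le> (M + 1) ^ c * card S"
  using out_ball_finite_card_le[of S "E\<inverse>" M c] in_neighbours_le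
  unfolding in_ball_eq_out_ball_converse by auto

lemma constant_out_degree: "constant_out_degree V E"
  using out_degree unfolding constant_out_degree_def by blast

lemma funpow_closed: "x \<in> V \<Longrightarrow> (g ^^ n) x \<in> V"
  using self_embedding_funpow[OF embedding] unfolding self_embedding_def by blast

lemma dist_funpow: "x \<in> V \<Longrightarrow> y \<in> V \<Longrightarrow> dist E ((g ^^ n) x) ((g ^^ n) y) = dist E x y"
  by (rule self_embedding_dist[OF constant_out_degree edges_subset
        self_embedding_funpow[OF embedding]])

lemma geodesic_map_funpow: "is_geodesic V E xs \<Longrightarrow> is_geodesic V E (map (g ^^ n) xs)"
  by (rule geodesic_map_self_embedding[OF constant_out_degree edges_subset
        self_embedding_funpow[OF embedding]])

lemma dist_base_orbit_finite: "dist E v ((g ^^ n) v) \<noteq> \<infinity>"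
proof (induction n)
  case (Suc n)
  have "dist E ((g ^^ n) v) ((g ^^ n) (g v)) = dist E v (g v)"
    using dist_funpow base_in embedding unfolding self_embedding_def by blast
  then have "dist E v ((g ^^ Suc n) v) \<le> dist E v ((g ^^ n) v) + dist E v (g v)"
    using dist_triangle by (metis funpow_Suc_right o_apply)
  moreover obtain a b where "dist E v ((g ^^ n) v) = enat a" and "dist E v (g v) = enat b"
    using Suc dist_step_finite by auto
  ultimately show ?case
    by (metis enat_ord_simps(4) infinity_ileE plus_enat_simps(1))
qed (simp add: zero_enat_def)

definition disp :: "nat \<Rightarrow> nat" where
  "disp n = the_enat (dist E v ((g ^^ n) v))"

lemma dist_orbit: "dist E ((g ^^ i) v) ((g ^^ (i + n)) v) = enat (disp n)"
proof -
  have "dist E ((g ^^ i) v) ((g ^^ (i + n)) v) = dist E v ((g ^^ n) v)"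
    using dist_funpow[OF base_in funpow_closed[OF base_in]] by (simp add: funpow_add)
  then show ?thesis
    using dist_base_orbit_finite[of n] unfolding disp_def by (cases "dist E v ((g ^^ n) v)") simp_all
qed

lemma disp_add_le: "disp (m + n) \<le> disp m + disp n"
  using dist_triangle[of E v "(g ^^ (m + n)) v" "(g ^^ m) v"] dist_orbit[of 0] dist_orbit[of m n]
  by simp

lemma disp_le_linear: "disp n \<le> n * disp 1"
proof (induction n)
  case (Suc n)
  then show ?case
    using disp_add_le[of n 1] by simp
qed (use dist_orbit[of 0 0] in \<open>simp add: zero_enat_def\<close>)

lemma disp_mult_add_le: "disp (k * n + r) \<le> k * disp n + disp r"
proof (induction k)
  case (Suc k)
  then show ?case
    using disp_add_le[of n "k * n + r"] by (simp add: add.assoc)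
qed simp

lemma large_disp_min_on_tail:
  obtains N where "T < disp N" and "\<And>n. N \<le> n \<Longrightarrow> disp N \<le> disp n"
proof -
  have "{n. disp n \<le> T} \<subseteq> (\<lambda>n. (g ^^ n) v) -` out_ball E T {v}"
    using dist_orbit[of 0] by (auto simp: out_ball_def)
  moreover have "finite ((\<lambda>n. (g ^^ n) v) -` out_ball E T {v})"
    using finite_out_ball inj_orbit_if_not_elliptic[OF embedding not_elliptic base_in]
    by (intro finite_vimageI) auto
  ultimately obtain m where "\<And>n. disp n \<le> T \<Longrightarrow> n \<le> m"
    using finite_subset finite_nat_set_iff_bounded_le by (metis mem_Collect_eq)
  then have N0: "\<And>n. Suc m \<le> n \<Longrightarrow> T < disp n"
    by (meson not_less_eq_eq not_le)
  obtain N where "Suc m \<le> N" and least: "\<And>n. Suc m \<le> n \<Longrightarrow> disp N \<le> disp n"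
    using ex_has_least_nat[of "\<lambda>n. Suc m \<le> n" "Suc m" disp] by auto
  show ?thesis
  proof (rule that)
    show "T < disp N"
      using N0 \<open>Suc m \<le> N\<close> .
    show "disp N \<le> disp n" if "N \<le> n" for n
      using least \<open>Suc m \<le> N\<close> that by simp
  qed
qed

lemma dist_le_of_close:
  assumes "\<alpha> \<in> V" and "p \<in> V" and "dist E \<alpha> p = enat m" and "dist E \<alpha> q \<le> enat n"
    and "dist E p q \<le> enat c"
  shows "m \<le> n + \<delta> + (M + 1) ^ (\<delta> + c)"
proof -
  obtain n' where "dist E \<alpha> q = enat n'" and "n' \<le> n"
    using assms(4) enat_ile by fastforce
  then have "m \<le> n' + \<delta> + card (in_ball E (\<delta> + c) {q})"
    using dist_le_add_card_in_ball[OF assms(1-3) _ assms(5)] finite_in_ball by simp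
  then show ?thesis
    using card_in_ball_le[of "{q}" "\<delta> + c"] \<open>n' \<le> n\<close> by simp
qed

lemma geodesic_length_eq_disp:
  assumes "is_geodesic V E R" and "hd R = v" and "last R = (g ^^ N) v"
  shows "length R = Suc (disp N)"
proof -
  have "R \<noteq> []" and "enat (length R - 1) = dist E (hd R) (last R)"
    using assms(1) unfolding is_geodesic_def is_dpath_def by auto
  then have "length R - 1 = disp N"
    using assms(2,3) dist_orbit[of 0 N] by simp
  then show ?thesis
    using \<open>R \<noteq> []\<close> by (cases R) simp_all
qed

lemma translated_geodesic_point:
  assumes "is_geodesic V E R" and "hd R = v" and "last R = (g ^^ N) v" and "t \<le> disp N"
  shows "(g ^^ j) (R ! t) \<in> set (map (g ^^ j) R)"
    and "dist E ((g ^^ j) v) ((g ^^ j) (R ! t)) = enat t"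
    and "dist E ((g ^^ j) (R ! t)) ((g ^^ (N + j)) v) = enat (disp N - t)"
proof -
  have "t < length R" and "set R \<subseteq> V"
    using geodesic_length_eq_disp[OF assms(1-3)] geodesic_set_subset[OF assms(1)] assms(4) by auto
  then have "R ! t \<in> V"
    by auto
  show "(g ^^ j) (R ! t) \<in> set (map (g ^^ j) R)"
    using \<open>t < length R\<close> by simp
  show "dist E ((g ^^ j) v) ((g ^^ j) (R ! t)) = enat t"
    using geodesic_dist_nth(1)[OF assms(1) \<open>t < length R\<close>]
      dist_funpow[OF base_in \<open>R ! t \<in> V\<close>] assms(2)
    by simp
  have "(g ^^ (N + j)) v = (g ^^ j) ((g ^^ N) v)"
    by (simp only: add.commute[of N j] funpow_add o_apply)
  then show "dist E ((g ^^ j) (R ! t)) ((g ^^ (N + j)) v) = enat (disp N - t)"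
    using geodesic_dist_nth(2)[OF assms(1) \<open>t < length R\<close>] geodesic_length_eq_disp[OF assms(1-3)]
      dist_funpow[OF \<open>R ! t \<in> V\<close> funpow_closed[OF base_in]] assms(3)
    by simp
qed

lemma translated_geodesic_point_in_ball_long_side:
  assumes R: "is_geodesic V E R" "hd R = v" "last R = (g ^^ N) v"
    and least: "disp N \<le> disp (N + j)" and t: "disp j + \<delta> < t" "t \<le> disp N"
    and D: "is_geodesic V E D" "hd D = v" "last D = (g ^^ (N + j)) v"
  shows "(g ^^ j) (R ! t) \<in> in_ball E \<delta> (set D)"
proof -
  define u x z where "u = (g ^^ j) (R ! t)" and "x = (g ^^ j) v" and "z = (g ^^ (N + j)) v"
  note u = translated_geodesic_point[OF R t(2), where j = j, folded u_def x_def z_def]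
  have "dist E v x = enat (disp j)"
    using dist_orbit[of 0 j] x_def by simp
  then have "dist E v u \<le> enat (disp j + t)"
    using dist_triangle_enat[of E v x "disp j" u t] u(2) by simp
  then obtain fu where fu: "dist E v u = enat fu"
    using enat_ile by fastforce
  (* Minimality of disp N is what keeps u away from v. *)
  have "enat (disp (N + j)) \<le> enat fu + enat (disp N - t)"
    using dist_triangle[of E v z u] dist_orbit[of 0 "N + j"] fu u(3) z_def by simp
  then have "t \<le> fu"
    using least t by simp
  obtain S1 where S1: "is_geodesic V E S1" "hd S1 = v" "last S1 = x"
    using geodesic_exists[OF edges_subset base_in \<open>dist E v x = enat (disp j)\<close>] .
  have "(g ^^ j) ((g ^^ N) v) = z"
    unfolding z_def by (simp only: add.commute[of N j] funpow_add o_apply)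
  moreover have "R \<noteq> []"
    using geodesic_length_eq_disp[OF R] by auto
  ultimately have "hd (map (g ^^ j) R) = x" and "last (map (g ^^ j) R) = z"
    using R(2,3) x_def by (simp_all add: hd_map last_map)
  moreover have "dist E (hd S1) (last S1) + enat \<delta> < dist E (hd S1) u"
    using S1(2,3) \<open>dist E v x = enat (disp j)\<close> fu t(1) \<open>t \<le> fu\<close> by simp
  ultimately show ?thesis
    using in_ball_third_side_if_far[OF geodesic_map_funpow[OF R(1), where n = j] S1(1) D(1), where w = v]
      S1 D u(1) z_def u_def
    by (simp add: insert_commute)
qed

lemma in_ball_long_side_near_prefix:
  assumes R: "is_geodesic V E R" "hd R = v" "last R = (g ^^ N) v"
    and D: "is_geodesic V E D" "hd D = v" "last D = (g ^^ (N + j)) v"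
    and d: "d \<in> set D" "dist E u d \<le> enat \<delta>"
    and u: "dist E v u \<le> enat k" "enat (2 * \<delta> + disp j) < dist E u ((g ^^ (N + j)) v)"
    and H: "k + 2 * \<delta> + (M + 1) ^ (2 * \<delta>) \<le> H"
  shows "u \<in> in_ball E \<delta> (out_ball E \<delta> (set (take (Suc H) R)))"
proof -
  have "dist E ((g ^^ N) v) ((g ^^ (N + j)) v) = enat (disp j)"
    using dist_orbit[of N j] by simp
  then obtain S2 where S2: "is_geodesic V E S2" "hd S2 = (g ^^ N) v" "last S2 = (g ^^ (N + j)) v"
    using geodesic_exists[OF edges_subset funpow_closed[OF base_in]] by blast
  have "\<not> dist E d ((g ^^ (N + j)) v) \<le> enat (\<delta> + disp j)"
  proof
    assume "dist E d ((g ^^ (N + j)) v) \<le> enat (\<delta> + disp j)"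
    then have "dist E u ((g ^^ (N + j)) v) \<le> enat (\<delta> + (\<delta> + disp j))"
      using dist_triangle_enat[OF d(2)] by blast
    then show False
      using u(2) by (metis add.assoc leD mult_2)
  qed
  then have "d \<in> out_ball E \<delta> (set R)"
    using out_ball_second_side_if_far[OF D(1) R(1) S2(1), where w = "(g ^^ N) v"] d(1) R D S2
      \<open>dist E ((g ^^ N) v) ((g ^^ (N + j)) v) = enat (disp j)\<close>
    by (simp add: not_le insert_commute)
  then obtain r where "r \<in> set R" and rd: "dist E r d \<le> enat \<delta>"
    unfolding out_ball_def by blast
  have "dist E v r \<le> enat (disp N)"
    using dist_hd_geodesic_le(1)[OF R(1) \<open>r \<in> set R\<close>] R(2,3) dist_orbit[of 0 N] by simp
  then obtain i where ri: "dist E v r = enat i"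
    using enat_ile by blast
  have "r \<in> V"
    using geodesic_set_subset[OF R(1)] \<open>r \<in> set R\<close> by blast
  have "dist E v d \<le> enat (k + \<delta>)"
    using dist_triangle_enat[OF u(1) d(2)] .
  from dist_le_of_close[OF base_in \<open>r \<in> V\<close> ri this rd]
  have "i \<le> k + \<delta> + \<delta> + (M + 1) ^ (\<delta> + \<delta>)" .
  then have "r \<in> set (take (Suc H) R)"
    using in_set_take_if_dist_hd_geodesic_le[OF R(1) \<open>r \<in> set R\<close>] R(2) ri H by (simp add: mult_2)
  then show ?thesis
    using rd d(2) unfolding in_ball_def out_ball_def by blast
qed

lemma translated_geodesic_point_near_prefix:
  assumes R: "is_geodesic V E R" "hd R = v" "last R = (g ^^ N) v"
    and least: "disp N \<le> disp (N + j)"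
    and t: "disp j + \<delta> < t" "t + disp j + 2 * \<delta> < disp N"
    and H: "t + disp j + 2 * \<delta> + (M + 1) ^ (2 * \<delta>) \<le> H"
  shows "(g ^^ j) (R ! t) \<in> in_ball E \<delta> (out_ball E \<delta> (set (take (Suc H) R)))"
proof -
  have "t \<le> disp N"
    using t by simp
  note u = translated_geodesic_point[OF R this, where j = j]
  have "dist E v ((g ^^ (N + j)) v) = enat (disp (N + j))"
    using dist_orbit[of 0 "N + j"] by simp
  then obtain D where D: "is_geodesic V E D" "hd D = v" "last D = (g ^^ (N + j)) v"
    using geodesic_exists[OF edges_subset base_in] by blast
  have "(g ^^ j) (R ! t) \<in> in_ball E \<delta> (set D)"
    using translated_geodesic_point_in_ball_long_side[OF R least t(1) \<open>t \<le> disp N\<close> D] .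
  then obtain d where "d \<in> set D" and "dist E ((g ^^ j) (R ! t)) d \<le> enat \<delta>"
    unfolding in_ball_def by blast
  moreover have "dist E v ((g ^^ j) (R ! t)) \<le> enat (disp j + t)"
    using dist_triangle_enat[of E v "(g ^^ j) v" "disp j"] dist_orbit[of 0 j] u(2) by simp
  moreover have "enat (2 * \<delta> + disp j) < dist E ((g ^^ j) (R ! t)) ((g ^^ (N + j)) v)"
    using u(3) t(2) by simp
  ultimately show ?thesis
    using in_ball_long_side_near_prefix[OF R D] H by (simp add: add.commute)
qed

lemma orbit_segment_length_le:
  assumes "\<And>j. j \<le> J \<Longrightarrow> disp j \<le> A"
  shows "J + 1 \<le> (2 * A + 3 * \<delta> + (M + 1) ^ (2 * \<delta>) + 2) * ((M + 1) ^ \<delta> * (K + 1) ^ \<delta>)"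
proof -
  define t H where "t = A + \<delta> + 1" and "H = 2 * A + 3 * \<delta> + 1 + (M + 1) ^ (2 * \<delta>)"
  obtain N where N: "2 * A + 3 * \<delta> + 1 < disp N" and least: "\<And>n. N \<le> n \<Longrightarrow> disp N \<le> disp n"
    using large_disp_min_on_tail by blast
  have "dist E v ((g ^^ N) v) = enat (disp N)"
    using dist_orbit[of 0 N] by simp
  then obtain R where R: "is_geodesic V E R" "hd R = v" "last R = (g ^^ N) v"
    using geodesic_exists[OF edges_subset base_in] by blast
  define B where "B = in_ball E \<delta> (out_ball E \<delta> (set (take (Suc H) R)))"
  have in_B: "(g ^^ j) (R ! t) \<in> B" if "j \<le> J" for j
  proof -
    have "disp j \<le> A"
      using assms that .
    then show ?thesis
      unfolding B_def
      using translated_geodesic_point_near_prefix[OF R least[of "N + j"], of t H] N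
      by (simp add: t_def H_def)
  qed
  have inj: "inj_on (\<lambda>j. (g ^^ j) (R ! t)) {..J}"
  proof -
    have "R ! t \<in> V"
      using N geodesic_length_eq_disp[OF R] geodesic_set_subset[OF R(1)] unfolding t_def by auto
    then show ?thesis
      using inj_orbit_if_not_elliptic[OF embedding not_elliptic] by (blast intro: inj_on_subset)
  qed
  have "finite B" and card_B: "card B \<le> (M + 1) ^ \<delta> * ((K + 1) ^ \<delta> * Suc H)"
  proof -
    let ?P = "set (take (Suc H) R)"
    have "finite (out_ball E \<delta> ?P)"
      using finite_out_ball by blast
    then show "finite B"
      unfolding B_def by (rule finite_in_ball)
    have "card B \<le> (M + 1) ^ \<delta> * card (out_ball E \<delta> ?P)"
      unfolding B_def using card_in_ball_le \<open>finite (out_ball E \<delta> ?P)\<close> .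
    also have "\<dots> \<le> (M + 1) ^ \<delta> * ((K + 1) ^ \<delta> * card ?P)"
      using card_out_ball_le by (intro mult_le_mono2) blast
    also have "\<dots> \<le> (M + 1) ^ \<delta> * ((K + 1) ^ \<delta> * Suc H)"
      using card_length[of "take (Suc H) R"] by (intro mult_le_mono2) simp
    finally show "card B \<le> (M + 1) ^ \<delta> * ((K + 1) ^ \<delta> * Suc H)" .
  qed
  have "card {..J} \<le> card B"
    using card_inj_on_le[OF inj _ \<open>finite B\<close>] in_B by blast
  then show ?thesis
    using card_B by (simp add: H_def algebra_simps)
qed

lemma linear_le_disp: "n \<le> 2 * ((M + 1) ^ \<delta> * (K + 1) ^ \<delta>) * disp n"
proof (rule ccontr)
  define \<beta> W where "\<beta> = (M + 1) ^ \<delta> * (K + 1) ^ \<delta>" and "W = 3 * \<delta> + (M + 1) ^ (2 * \<delta>) + 2"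
  assume "\<not> n \<le> 2 * ((M + 1) ^ \<delta> * (K + 1) ^ \<delta>) * disp n"
  then have "2 * \<beta> * disp n \<le> n - 1" and "0 < n"
    unfolding \<beta>_def by auto
  (* q makes the segment bound for [0, q n] at most q n. *)
  define q where "q = (2 * disp 1 * n + W) * \<beta>"
  define A where "A = q * disp n + disp 1 * n"
  have "disp j \<le> A" if "j \<le> q * n" for j
  proof -
    have "j div n \<le> q"
      using div_le_mono[OF that, of n] \<open>0 < n\<close> by simp
    have "disp j = disp (j div n * n + j mod n)"
      by simp
    also have "\<dots> \<le> j div n * disp n + disp (j mod n)"
      by (rule disp_mult_add_le)
    also have "\<dots> \<le> q * disp n + j mod n * disp 1"
      using \<open>j div n \<le> q\<close> disp_le_linear[of "j mod n"] by (intro add_mono mult_le_mono1)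
    also have "\<dots> \<le> A"
      unfolding A_def using \<open>0 < n\<close> by (simp add: mult.commute)
    finally show ?thesis .
  qed
  then have "q * n + 1 \<le> (2 * A + W) * \<beta>"
    using orbit_segment_length_le unfolding W_def \<beta>_def by (simp add: add.assoc)
  also have "\<dots> = q * (2 * \<beta> * disp n) + q"
    unfolding A_def q_def by (simp add: algebra_simps)
  also have "\<dots> \<le> q * (n - 1) + q"
    using \<open>2 * \<beta> * disp n \<le> n - 1\<close> by simp
  also have "\<dots> = q * n"
    using \<open>0 < n\<close> by (cases n) simp_all
  finally show False
    by simp
qed

lemma orbit_quasi_isometric:
  "\<exists>\<gamma>::real. \<exists>c::real. \<gamma> \<ge> 1 \<and> c \<ge> 0 \<and>
    (\<forall>i j::nat. i \<le> j \<longrightarrow> (\<exists>n::nat. dist E ((g ^^ i) v) ((g ^^ j) v) = enat n \<and>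
        real (j - i) / \<gamma> - c \<le> real n \<and> real n \<le> \<gamma> * real (j - i) + c))"
proof (intro exI conjI allI impI)
  define \<beta> where "\<beta> = (M + 1) ^ \<delta> * (K + 1) ^ \<delta>"
  define \<gamma> where "\<gamma> = real (max (2 * \<beta>) (disp 1))"
  have "1 \<le> \<beta>"
    unfolding \<beta>_def by simp
  then show "1 \<le> \<gamma>"
    unfolding \<gamma>_def by linarith
  fix i j :: nat
  assume "i \<le> j"
  let ?k = "j - i"
  show "dist E ((g ^^ i) v) ((g ^^ j) v) = enat (disp ?k)"
    using dist_orbit[of i ?k] \<open>i \<le> j\<close> by simp
  have "real ?k \<le> real (2 * \<beta>) * real (disp ?k)"
    using linear_le_disp[of ?k] unfolding \<beta>_def of_nat_mult[symmetric] of_nat_le_iff .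
  also have "\<dots> \<le> \<gamma> * real (disp ?k)"
    unfolding \<gamma>_def by (intro mult_right_mono) simp_all
  finally show "real ?k / \<gamma> - 0 \<le> real (disp ?k)"
    using \<open>1 \<le> \<gamma>\<close> by (simp add: divide_le_eq mult.commute)
  have "real (disp ?k) \<le> real ?k * real (disp 1)"
    using disp_le_linear[of ?k] unfolding of_nat_mult[symmetric] of_nat_le_iff .
  also have "\<dots> \<le> \<gamma> * real ?k"
    unfolding \<gamma>_def by (subst mult.commute) (intro mult_left_mono; simp)
  finally show "real (disp ?k) \<le> \<gamma> * real ?k + 0"
    by simp
qed simp

end

theorem proposition3p3:
  fixes V :: "'a set" and E :: "('a \<times> 'a) set" and g :: "'a \<Rightarrow> 'a" and v :: 'a
  assumes "E \<subseteq> V \<times> V"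
    and "rooted V E" and "hyperbolic_digraph V E"
    and "constant_out_degree V E" and "bounded_in_degree V E"
    and "self_embedding V E g" and "\<not> elliptic V g"
    and "v \<in> V" and "dist E v (g v) < \<infinity>"
  shows "\<exists>\<gamma>::real. \<exists>c::real. \<gamma> \<ge> 1 \<and> c \<ge> 0 \<and>
    (\<forall>i j::nat. i \<le> j \<longrightarrow> (\<exists>n::nat. dist E ((g ^^ i) v) ((g ^^ j) v) = enat n \<and>
        real (j - i) / \<gamma> - c \<le> real n \<and> real n \<le> \<gamma> * real (j - i) + c))"
proof -
  obtain \<delta> where "\<And>x y z P Q R. geodesic_triangle V E x y z P Q R \<Longrightarrow> thin_triangle E \<delta> P Q R"
    using assms(3) unfolding hyperbolic_digraph_def by blast
  moreover obtain K where "\<forall>x\<in>V. finite {w. (x, w) \<in> E} \<and> card {w. (x, w) \<in> E} = K"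
    using assms(4) unfolding constant_out_degree_def by blast
  moreover obtain M where "\<forall>x\<in>V. finite {u. (u, x) \<in> E} \<and> card {u. (u, x) \<in> E} \<le> M"
    using assms(5) unfolding bounded_in_degree_def by blast
  ultimately interpret embedding_orbit V E \<delta> K M g v
    using assms by unfold_locales auto
  show ?thesis
    by (rule orbit_quasi_isometric)
qed

end
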